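(* For every integer $m\geq 0$, $T(\Lambda_{m+1})\subseteq\Lambda_m$, i.e. $T(n)\in\Lambda_m$ for every $n\in\Lambda_{m+1}$.
   Context: $\mathbb{N}=\{1,2,3,\dots\}$, $\mathbb{N}_0=\mathbb{N}\cup\{0\}$. The Collatz map $T:\mathbb{N}\to\mathbb{N}$ is $T(n)=\frac{3n+1}{2}$ if $n$ is odd and $T(n)=\frac{n}{2}$ if $n$ is even. For $0\leq m\leq 3$ let $\Lambda_m=\{2^m\}$, and for $m\geq 4$ let $\Lambda_m$ be the set of all $n\in\mathbb{N}$ that can be written as $n=\frac{2^m}{3^l}-\sum_{k=1}^{l}\frac{2^{b_k}}{3^k}$ for some integers $l,b_1,\dots,b_l\in\mathbb{N}_0$ with $0\leq l\leq m-3$ and $0\leq b_1<b_2<\cdots<b_l\leq m-4$ (for $l=0$ the sum is empty). *)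

theory Defs
  imports Main "HOL.Rat"
begin

definition collatzT :: "nat \<Rightarrow> nat" where
  "collatzT n = (if odd n then (3 * n + 1) div 2 else n div 2)"

text \<open>Lambda m. The sequence b_1,...,b_l is given by a function b :: nat => nat,
  only its values at 1..l matter.\<close>
definition Lambda :: "nat \<Rightarrow> nat set" where
  "Lambda m = (if m \<le> 3 then {2 ^ m} else
     {n. n \<ge> 1 \<and> (\<exists>l (b :: nat \<Rightarrow> nat).
          l \<le> m - 3 \<and>
          (\<forall>k. 1 \<le> k \<and> k < l \<longrightarrow> b k < b (Suc k)) \<and>
          (\<forall>k\<in>{1..l}. b k \<le> m - 4) \<and>
          (of_nat n :: rat) = 2 ^ m / 3 ^ l - (\<Sum>k=1..l. 2 ^ (b k) / 3 ^ k))})"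

end

theory Submission
  imports Defs
begin

text \<open>Clearing denominators, n \<in> \<Lambda>(m+1) with data l, b means
  3^l n + \<Sum> 2^(b k) 3^(l-k) = 2^(m+1). Since b is strictly increasing, only b 1 can be 0,
  so n is odd exactly when l > 0 and b 1 = 0. If n is even, halving lowers m and every
  exponent b k by one. If n is odd, then in 3n + 1 the +1 cancels the leading term
  3 \<cdot> 2^(b 1)/3 = 1 of the sum, which shortens the representation to length l - 1;
  halving then finishes as in the even case.\<close>

definition lambda_exponents :: "nat \<Rightarrow> nat \<Rightarrow> (nat \<Rightarrow> nat) \<Rightarrow> bool" where
  "lambda_exponents m l b \<longleftrightarrow>
     l \<le> m - 3 \<and> (\<forall>k. 1 \<le> k \<and> k < l \<longrightarrow> b k < b (Suc k)) \<and> (\<forall>k\<in>{1..l}. b k \<le> m - 4)"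

definition lambda_value :: "nat \<Rightarrow> nat \<Rightarrow> (nat \<Rightarrow> nat) \<Rightarrow> rat" where
  "lambda_value m l b = 2 ^ m / 3 ^ l - (\<Sum>k=1..l. 2 ^ b k / 3 ^ k)"

definition weighted_sum :: "nat \<Rightarrow> (nat \<Rightarrow> nat) \<Rightarrow> nat" where
  "weighted_sum l b = (\<Sum>k=1..l. 2 ^ b k * 3 ^ (l - k))"

lemma Lambda_eq:
  assumes "3 \<le> m"
  shows "Lambda m = {n. 1 \<le> n \<and> (\<exists>l b. lambda_exponents m l b \<and> of_nat n = lambda_value m l b)}"
proof (cases "m = 3")
  case True
  have value_8: "lambda_value 3 l b = 8" if "lambda_exponents 3 l b" for l b
    using that by (simp add: lambda_exponents_def lambda_value_def)
  show ?thesis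
  proof (intro set_eqI iffI)
    fix n assume "n \<in> Lambda m"
    then have "n = 8" using True by (simp add: Lambda_def)
    moreover have "lambda_exponents 3 0 id" by (simp add: lambda_exponents_def)
    ultimately show "n \<in> {n. 1 \<le> n \<and> (\<exists>l b. lambda_exponents m l b \<and> of_nat n = lambda_value m l b)}"
      using True value_8 by auto
  next
    fix n assume "n \<in> {n. 1 \<le> n \<and> (\<exists>l b. lambda_exponents m l b \<and> of_nat n = lambda_value m l b)}"
    then have "(of_nat n :: rat) = of_nat 8" using True value_8 by auto
    then show "n \<in> Lambda m" using True by (simp only: of_nat_eq_iff) (simp add: Lambda_def)
  qed
qed (use assms in \<open>simp add: Lambda_def lambda_exponents_def lambda_value_def\<close>)

lemma strict_inc_exponent_bound:
  assumes "\<forall>k. 1 \<le> k \<and> k < l \<longrightarrow> b k < b (Suc k)" and "1 \<le> k" and "k \<le> l"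
  shows "b 1 + (k - 1) \<le> b k"
  using assms(2,3)
proof (induction k)
  case (Suc k)
  show ?case
  proof (cases "k = 0")
    case False
    then have "b 1 + (k - 1) \<le> b k" and "b k < b (Suc k)" using Suc assms(1) by simp_all
    then show ?thesis by linarith
  qed simp
qed simp

lemma of_nat_weighted_sum:
  "(of_nat (weighted_sum l b) :: rat) = 3 ^ l * (\<Sum>k=1..l. 2 ^ b k / 3 ^ k)"
  unfolding weighted_sum_def of_nat_sum sum_distrib_left
proof (rule sum.cong)
  fix k assume "k \<in> {1..l}"
  then have "(3::rat) ^ l = 3 ^ (l - k) * 3 ^ k" by (simp flip: power_add)
  then show "of_nat (2 ^ b k * 3 ^ (l - k)) = (3::rat) ^ l * (2 ^ b k / 3 ^ k)" by simp
qed simp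

lemma lambda_value_clear_denominators:
  assumes "of_nat n = lambda_value m l b"
  shows "n * 3 ^ l + weighted_sum l b = 2 ^ m"
proof -
  have "(of_nat (n * 3 ^ l + weighted_sum l b) :: rat) = of_nat n * 3 ^ l + 3 ^ l * (\<Sum>k=1..l. 2 ^ b k / 3 ^ k)"
    by (simp add: of_nat_weighted_sum)
  also have "\<dots> = of_nat (2 ^ m)" using assms by (simp add: lambda_value_def field_simps)
  finally show ?thesis by (simp only: of_nat_eq_iff)
qed

lemma even_iff_even_weighted_sum:
  assumes "n * 3 ^ l + weighted_sum l b = 2 ^ Suc m"
  shows "even n \<longleftrightarrow> even (weighted_sum l b)"
proof -
  have "even (n * 3 ^ l + weighted_sum l b)" unfolding assms by simp
  then show ?thesis by auto
qed

lemma even_weighted_sum: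
  assumes "\<forall>k\<in>{1..l}. 1 \<le> b k"
  shows "even (weighted_sum l b)"
  unfolding weighted_sum_def
proof (rule dvd_sum)
  fix k assume "k \<in> {1..l}"
  then have "1 \<le> b k" using assms by blast
  then show "even (2 ^ b k * 3 ^ (l - k) :: nat)" by simp
qed

lemma odd_weighted_sum:
  assumes "b 1 = 0" and "\<forall>j\<in>{1..l}. 1 \<le> b (Suc j)"
  shows "odd (weighted_sum (Suc l) b)"
proof -
  have "weighted_sum (Suc l) b = 3 ^ l + (\<Sum>k=2..Suc l. 2 ^ b k * 3 ^ (Suc l - k))"
    unfolding weighted_sum_def using assms(1)
    by (subst sum.atLeast_Suc_atMost) (simp_all add: numeral_2_eq_2)
  moreover have "even (\<Sum>k=2..Suc l. 2 ^ b k * 3 ^ (Suc l - k) :: nat)"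
  proof (rule dvd_sum)
    fix k assume "k \<in> {2..Suc l}"
    then have "k = Suc (k - 1)" and "k - 1 \<in> {1..l}" by auto
    then have "1 \<le> b k" using assms(2) by metis
    then show "even (2 ^ b k * 3 ^ (Suc l - k) :: nat)" by simp
  qed
  ultimately show ?thesis by simp
qed

lemma lambda_value_halve:
  assumes "\<forall>k\<in>{1..l}. 1 \<le> b k"
  shows "lambda_value (Suc m) l b = 2 * lambda_value m l (\<lambda>k. b k - 1)"
proof -
  have "(\<Sum>k=1..l. 2 ^ b k / 3 ^ k) = (\<Sum>k=1..l. 2 * (2 ^ (b k - 1) / (3::rat) ^ k))"
  proof (rule sum.cong)
    fix k assume "k \<in> {1..l}"
    then have "b k = Suc (b k - 1)" using assms by force
    then show "2 ^ b k / 3 ^ k = 2 * (2 ^ (b k - 1) / (3::rat) ^ k)" by (metis power_Suc times_divide_eq_right)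
  qed simp
  then show ?thesis by (simp add: lambda_value_def sum_distrib_left right_diff_distrib)
qed

lemma lambda_value_odd_step:
  assumes "b 1 = 0" and "\<forall>j\<in>{1..l}. 1 \<le> b (Suc j)"
  shows "3 * lambda_value (Suc m) (Suc l) b + 1 = 2 * lambda_value m l (\<lambda>j. b (Suc j) - 1)"
proof -
  have "3 * (\<Sum>k=1..Suc l. 2 ^ b k / (3::rat) ^ k) = (\<Sum>k=Suc 0..Suc l. 2 ^ b k / 3 ^ (k - 1))"
    unfolding sum_distrib_left
  proof (rule sum.cong)
    fix k :: nat assume "k \<in> {Suc 0..Suc l}"
    then have "k = Suc (k - 1)" by simp
    then have "(3::rat) ^ k = 3 * 3 ^ (k - 1)" by (metis power_Suc)
    then show "3 * (2 ^ b k / (3::rat) ^ k) = 2 ^ b k / 3 ^ (k - 1)" by simp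
  qed simp
  also have "\<dots> = (\<Sum>k=0..l. 2 ^ b (Suc k) / 3 ^ k)"
    by (simp only: sum.shift_bounds_cl_Suc_ivl) simp
  also have "\<dots> = 1 + (\<Sum>j=1..l. 2 ^ b (Suc j) / 3 ^ j)"
    using assms(1) by (simp add: sum.atLeast_Suc_atMost)
  also have "\<dots> = 1 + 2 * (\<Sum>j=1..l. 2 ^ (b (Suc j) - 1) / 3 ^ j)"
    using lambda_value_halve[of l "\<lambda>j. b (Suc j)" 0] assms(2)
    by (simp add: lambda_value_def)
  finally show ?thesis by (simp add: lambda_value_def field_simps)
qed

lemma lambda_exponents_pred:
  assumes exps: "lambda_exponents (Suc m) l b" and pos: "\<forall>k\<in>{1..l}. 1 \<le> b k"
  shows "lambda_exponents m l (\<lambda>k. b k - 1)"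
proof -
  have mono: "\<forall>k. 1 \<le> k \<and> k < l \<longrightarrow> b k < b (Suc k)"
    and bound: "\<forall>k\<in>{1..l}. b k \<le> m - 3"
    using exps by (auto simp: lambda_exponents_def)
  have "l \<le> m - 3"
  proof (cases "l = 0")
    case False
    then have "b 1 + (l - 1) \<le> b l" and "1 \<le> b 1" and "b l \<le> m - 3"
      using strict_inc_exponent_bound[OF mono, of l] pos bound by auto
    then show ?thesis by linarith
  qed simp
  moreover have "b k - 1 < b (Suc k) - 1" if "1 \<le> k" and "k < l" for k
  proof -
    have "1 \<le> b k" and "b k < b (Suc k)" using mono pos that by auto
    then show ?thesis by arith
  qed
  moreover have "b k - 1 \<le> m - 4" if "k \<in> {1..l}" for k
    using bound that by fastforce
  ultimately show ?thesis unfolding lambda_exponents_def by blast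
qed

lemma lambda_exponents_tail:
  assumes "lambda_exponents m (Suc l) b"
  shows "lambda_exponents m l (\<lambda>j. b (Suc j))"
  using assms unfolding lambda_exponents_def by auto

lemma collatzT_Lambda_even_step:
  assumes "3 \<le> m" and "1 \<le> n" and exps: "lambda_exponents (Suc m) l b"
    and n: "of_nat n = lambda_value (Suc m) l b" and pos: "\<forall>k\<in>{1..l}. 1 \<le> b k"
  shows "collatzT n \<in> Lambda m"
proof -
  have "even n"
    using even_iff_even_weighted_sum[OF lambda_value_clear_denominators[OF n]] even_weighted_sum[OF pos]
    by blast
  then have "of_nat (collatzT n) = lambda_value m l (\<lambda>k. b k - 1)"
    using n lambda_value_halve[OF pos] by (auto simp: collatzT_def elim!: evenE)
  moreover have "lambda_exponents m l (\<lambda>k. b k - 1)" by (rule lambda_exponents_pred[OF exps pos])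
  moreover have "1 \<le> collatzT n" using \<open>even n\<close> \<open>1 \<le> n\<close> by (auto simp: collatzT_def elim!: evenE)
  ultimately show ?thesis using Lambda_eq[OF \<open>3 \<le> m\<close>] by blast
qed

lemma collatzT_Lambda_odd_step:
  assumes "3 \<le> m" and "1 \<le> n" and exps: "lambda_exponents (Suc m) (Suc l) b"
    and n: "of_nat n = lambda_value (Suc m) (Suc l) b" and "b 1 = 0"
  shows "collatzT n \<in> Lambda m"
proof -
  have pos: "\<forall>j\<in>{1..l}. 1 \<le> b (Suc j)"
  proof
    fix j assume "j \<in> {1..l}"
    moreover have "\<forall>k. 1 \<le> k \<and> k < Suc l \<longrightarrow> b k < b (Suc k)"
      using exps by (simp add: lambda_exponents_def)
    ultimately have "b 1 + (Suc j - 1) \<le> b (Suc j)" by (intro strict_inc_exponent_bound[of "Suc l"]) auto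
    then show "1 \<le> b (Suc j)" using \<open>j \<in> {1..l}\<close> by simp
  qed
  have "odd n"
    using even_iff_even_weighted_sum[OF lambda_value_clear_denominators[OF n]]
      odd_weighted_sum[of b l] \<open>b 1 = 0\<close> pos by blast
  then have "even (3 * n + 1)" by simp
  then obtain q where q: "3 * n + 1 = 2 * q" by (rule evenE)
  have "of_nat (collatzT n) = lambda_value m l (\<lambda>j. b (Suc j) - 1)"
  proof -
    have "2 * (of_nat q :: rat) = 3 * of_nat n + 1" using arg_cong[OF q, of "of_nat :: nat \<Rightarrow> rat"] by simp
    also have "\<dots> = 2 * lambda_value m l (\<lambda>j. b (Suc j) - 1)"
      using n lambda_value_odd_step[of b l m] \<open>b 1 = 0\<close> pos by simp
    finally show ?thesis using q \<open>odd n\<close> by (simp add: collatzT_def)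
  qed
  moreover have "lambda_exponents m l (\<lambda>j. b (Suc j) - 1)"
    using lambda_exponents_pred[OF lambda_exponents_tail[OF exps]] pos by simp
  moreover have "1 \<le> collatzT n" using q \<open>odd n\<close> \<open>1 \<le> n\<close> by (simp add: collatzT_def)
  ultimately show ?thesis using Lambda_eq[OF \<open>3 \<le> m\<close>] by blast
qed

theorem mainTheorem1:
  fixes m n :: nat
  assumes "n \<in> Lambda (m + 1)"
  shows "collatzT n \<in> Lambda m"
proof (cases "m \<le> 2")
  case True
  then have "n = 2 ^ Suc m" using assms by (simp add: Lambda_def)
  then show ?thesis using True by (simp add: Lambda_def collatzT_def)
next
  case False
  then have "3 \<le> m" by simp
  with assms obtain l b where "1 \<le> n" and exps: "lambda_exponents (Suc m) l b"
    and n: "of_nat n = lambda_value (Suc m) l b"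
    using Lambda_eq[of "Suc m"] by auto
  show ?thesis
  proof (cases "l = 0 \<or> 1 \<le> b 1")
    case True
    have "1 \<le> b k" if "k \<in> {1..l}" for k
    proof -
      have "b 1 + (k - 1) \<le> b k"
        using exps that by (intro strict_inc_exponent_bound[of l]) (auto simp: lambda_exponents_def)
      then show ?thesis using True that by auto
    qed
    then show ?thesis using collatzT_Lambda_even_step \<open>3 \<le> m\<close> \<open>1 \<le> n\<close> exps n by blast
  next
    case False
    then obtain l' where "l = Suc l'" and "b 1 = 0" by (cases l) auto
    then show ?thesis using collatzT_Lambda_odd_step \<open>3 \<le> m\<close> \<open>1 \<le> n\<close> exps n by blast
  qed
qed

end
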